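(* Let $U=(E,\mathcal{D},\rho)$ be a U-matroid with $E\setminus\mathrm{Atom}(\mathcal{D})=\{a_1,\dots,a_m\}$, where $\mathrm{Atom}(\mathcal{D})=\{a\in E:\{a\}\in\mathcal{D}\}$. Then: 1. The iterated generous extension $\hat\rho=\rho_{a_1,\dots,a_m}=(((\rho_{a_1})_{a_2})\dots)_{a_m}$, a matroid rank function on $2^E$, dominates every other matroid extension of $\rho$ to $2^E$ (i.e. $\hat\rho(S)\ge\rho'(S)$ for all $S$ and every matroid rank function $\rho'$ on $2^E$ with $\rho'|_{\mathcal{D}}=\rho$). 2. In particular, $\hat\rho$ is an invariant of $\rho$ that is independent of the order of the $a_i$ and dominates every other matroid extension of $\rho$. 3. For every lattice $\mathcal{D}'$ with $\mathcal{D}\subseteq\mathcal{D}'\subseteq 2^E$, the lattice extension $\hat\rho|_{\mathcal{D}'}$ dominates every other lattice extension of $U$ to $\mathcal{D}'$ (U-matroid rank function on $\mathcal{D}'$ restricting to $\rho$ on $\mathcal{D}$).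
   Context: A U-matroid is a triple $(E,\mathcal{D},\rho)$ with $E$ finite, $\mathcal{D}\subseteq2^E$ an accessible distributive lattice of sets (closed under union and intersection, containing $\emptyset,E$, every nonempty member $A$ has some $x\in A$ with $A-x\in\mathcal{D}$), and $\rho:\mathcal{D}\to\mathbb{N}$ with $\rho(\emptyset)=0$, monotone, submodular, with unit increase. For $a\in E\setminus\mathrm{Atom}(\mathcal{D})$, let $\mathcal{D}[a]=\mathcal{D}\cup\{S\cup\{a\}:S\in\mathcal{D}\}$ and $\sup_\mathcal{D}(S)$ the smallest element of $\mathcal{D}$ containing $S$. The generous atom extension $\rho_a:\mathcal{D}[a]\to\mathbb{N}$ is defined by $\rho_a(S)=\rho(S)$ if $S\in\mathcal{D}$; $\rho_a(S)=\rho(S-a)$ if $S\notin\mathcal{D}$ and $\rho(S-a)=\rho(\sup_\mathcal{D}(S))$; and $\rho_a(S)=\rho(S-a)+1$ if $S\notin\mathcal{D}$ and $\rho(S-a)<\rho(\sup_\mathcal{D}(S))$. It is known that $(E,\mathcal{D}[a],\rho_a)$ is again a U-matroid, so the extension can be iterated. *)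

theory Defs
  imports Main
begin

definition acc_lattice :: "'a set \<Rightarrow> 'a set set \<Rightarrow> bool" where
  "acc_lattice E D \<longleftrightarrow>
     D \<subseteq> Pow E \<and> {} \<in> D \<and> E \<in> D \<and>
     (\<forall>A\<in>D. \<forall>B\<in>D. A \<union> B \<in> D \<and> A \<inter> B \<in> D) \<and>
     (\<forall>A\<in>D. A \<noteq> {} \<longrightarrow> (\<exists>x\<in>A. A - {x} \<in> D))"

text \<open>U-matroid (E, D, rho); rho is only relevant on D.\<close>
definition umatroid :: "'a set \<Rightarrow> 'a set set \<Rightarrow> ('a set \<Rightarrow> nat) \<Rightarrow> bool" where
  "umatroid E D rho \<longleftrightarrow>
     finite E \<and> acc_lattice E D \<and> rho {} = 0 \<and>
     (\<forall>A\<in>D. \<forall>B\<in>D. A \<subseteq> B \<longrightarrow> rho A \<le> rho B) \<and>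
     (\<forall>A\<in>D. \<forall>B\<in>D. rho (A \<union> B) + rho (A \<inter> B) \<le> rho A + rho B) \<and>
     (\<forall>A\<in>D. \<forall>x. insert x A \<in> D \<longrightarrow> rho (insert x A) \<le> rho A + 1)"

definition Atom :: "'a set set \<Rightarrow> 'a set" where
  "Atom D = {a. {a} \<in> D}"

definition lat_ext :: "'a set set \<Rightarrow> 'a \<Rightarrow> 'a set set" where
  "lat_ext D a = D \<union> {insert a S | S. S \<in> D}"

definition sup_D :: "'a set set \<Rightarrow> 'a set \<Rightarrow> 'a set" where
  "sup_D D S = \<Inter> {T \<in> D. S \<subseteq> T}"

definition gen_ext :: "'a set set \<Rightarrow> ('a set \<Rightarrow> nat) \<Rightarrow> 'a \<Rightarrow> 'a set \<Rightarrow> nat" where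
  "gen_ext D rho a S =
     (if S \<in> D then rho S
      else if rho (S - {a}) = rho (sup_D D S) then rho (S - {a})
      else rho (S - {a}) + 1)"

fun gen_iter :: "'a set set \<Rightarrow> ('a set \<Rightarrow> nat) \<Rightarrow> 'a list \<Rightarrow> 'a set set \<times> ('a set \<Rightarrow> nat)" where
  "gen_iter D rho [] = (D, rho)"
| "gen_iter D rho (a # as) = gen_iter (lat_ext D a) (gen_ext D rho a) as"

end

theory Submission
  imports Defs
begin

text \<open>Let rho' be monotone with unit increase on 2^E and below rho on D.  For X \<notin> D these properties
  force rho' X \<le> rho (X - {a}) + 1 and rho' X \<le> rho (sup_D D X), and the generous extension rho_a X is
  exactly the minimum of the two bounds, so rho' \<le> rho_a on D[a].  Moreover rho_a is again a U-matroid
  because rho_a X = min {rho W + |X - W| : W \<in> D, X \<subseteq> W \<union> {a}}, a formula through which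
  submodularity is inherited from rho.  Iterating over all non-atoms reaches 2^E, and domination
  propagates along the iteration, so the result dominates every matroid extension of rho; two
  enumeration orders dominate each other and hence agree.  For an intermediate lattice D', a lattice
  extension rho' is first extended generously to 2^E; that matroid is dominated by the iterated
  extension of rho and agrees with rho' on D'.\<close>

lemma
  assumes "acc_lattice E D"
  shows acc_lattice_subset_Pow: "D \<subseteq> Pow E"
    and acc_lattice_empty: "{} \<in> D"
    and acc_lattice_top: "E \<in> D"
    and acc_lattice_Un: "A \<in> D \<Longrightarrow> B \<in> D \<Longrightarrow> A \<union> B \<in> D"
    and acc_lattice_Int: "A \<in> D \<Longrightarrow> B \<in> D \<Longrightarrow> A \<inter> B \<in> D"
    and acc_lattice_accessible: "A \<in> D \<Longrightarrow> A \<noteq> {} \<Longrightarrow> \<exists>x\<in>A. A - {x} \<in> D"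
  using assms unfolding acc_lattice_def by blast+

lemma
  assumes "umatroid E D rho"
  shows umatroid_finite: "finite E"
    and umatroid_acc_lattice: "acc_lattice E D"
    and umatroid_empty: "rho {} = 0"
    and umatroid_mono: "A \<in> D \<Longrightarrow> B \<in> D \<Longrightarrow> A \<subseteq> B \<Longrightarrow> rho A \<le> rho B"
    and umatroid_submod: "A \<in> D \<Longrightarrow> B \<in> D \<Longrightarrow> rho (A \<union> B) + rho (A \<inter> B) \<le> rho A + rho B"
    and umatroid_unit: "A \<in> D \<Longrightarrow> insert x A \<in> D \<Longrightarrow> rho (insert x A) \<le> rho A + 1"
  using assms unfolding umatroid_def by blast+

lemma umatroid_subset_lattice:
  assumes "umatroid E D rho" and "acc_lattice E D'" and "D' \<subseteq> D"
  shows "umatroid E D' rho"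
proof -
  have "\<forall>A\<in>D'. \<forall>B\<in>D'. A \<subseteq> B \<longrightarrow> rho A \<le> rho B"
    using umatroid_mono[OF assms(1)] assms(3) by blast
  moreover have "\<forall>A\<in>D'. \<forall>B\<in>D'. rho (A \<union> B) + rho (A \<inter> B) \<le> rho A + rho B"
    using umatroid_submod[OF assms(1)] assms(3) by blast
  moreover have "\<forall>A\<in>D'. \<forall>x. insert x A \<in> D' \<longrightarrow> rho (insert x A) \<le> rho A + 1"
    using umatroid_unit[OF assms(1)] assms(3) by blast
  ultimately show ?thesis
    unfolding umatroid_def using assms(2) umatroid_finite[OF assms(1)] umatroid_empty[OF assms(1)]
    by blast
qed

lemma acc_lattice_Inter:
  assumes "acc_lattice E D" and "finite F" and "F \<noteq> {}" and "F \<subseteq> D"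
  shows "\<Inter>F \<in> D"
  using assms(2-4) by (induction F rule: finite_ne_induct) (auto intro: acc_lattice_Int[OF assms(1)])

lemma acc_lattice_Union:
  assumes "acc_lattice E D" and "finite F" and "F \<subseteq> D"
  shows "\<Union>F \<in> D"
  using assms(2,3) by (induction F rule: finite_induct)
    (auto intro: acc_lattice_Un[OF assms(1)] acc_lattice_empty[OF assms(1)])

lemma acc_lattice_finite_mem:
  assumes "acc_lattice E D" and "finite E" and "X \<in> D"
  shows "finite X"
  using assms acc_lattice_subset_Pow by (metis PowD finite_subset subsetD)

lemma acc_lattice_Int_Atom:
  assumes L: "acc_lattice E D" and "finite E" and "X \<subseteq> E"
  shows "X \<inter> Atom D \<in> D"
proof -
  have "X \<inter> Atom D = \<Union>((\<lambda>x. {x}) ` (X \<inter> Atom D))" by blast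
  moreover have "finite (X \<inter> Atom D)" using assms by (meson finite_Int finite_subset)
  moreover have "(\<lambda>x. {x}) ` (X \<inter> Atom D) \<subseteq> D" unfolding Atom_def by blast
  ultimately show ?thesis using acc_lattice_Union[OF L] by (metis finite_imageI)
qed

lemma subset_sup_D: "S \<subseteq> sup_D D S"
  unfolding sup_D_def by blast

lemma sup_D_least: "T \<in> D \<Longrightarrow> S \<subseteq> T \<Longrightarrow> sup_D D S \<subseteq> T"
  unfolding sup_D_def by blast

lemma sup_D_mem:
  assumes L: "acc_lattice E D" and "finite E" and "S \<subseteq> E"
  shows "sup_D D S \<in> D"
proof -
  have "{T \<in> D. S \<subseteq> T} \<subseteq> Pow E" using acc_lattice_subset_Pow[OF L] by blast
  then have "finite {T \<in> D. S \<subseteq> T}" using \<open>finite E\<close> by (meson finite_Pow_iff finite_subset)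
  moreover have "E \<in> {T \<in> D. S \<subseteq> T}" using acc_lattice_top[OF L] \<open>S \<subseteq> E\<close> by blast
  ultimately show ?thesis
    unfolding sup_D_def using acc_lattice_Inter[OF L] by blast
qed

text \<open>Accessibility lets one remove an element y of Y while staying in D; if y lies in X,
  submodularity applied to Y - {y} and X transfers the bound from the smaller pair.\<close>
lemma umatroid_le_card_Diff:
  assumes U: "umatroid E D rho"
  shows "X \<in> D \<Longrightarrow> Y \<in> D \<Longrightarrow> X \<subseteq> Y \<Longrightarrow> rho Y \<le> rho X + card (Y - X)"
proof (induction "card Y" arbitrary: X Y rule: less_induct)
  case less
  note L = umatroid_acc_lattice[OF U]
  show ?case
  proof (cases "Y = {}")
    case True
    then show ?thesis using less.prems by simp
  next
    case False
    then obtain y where y: "y \<in> Y" "Y - {y} \<in> D"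
      using acc_lattice_accessible[OF L less.prems(2)] by blast
    have "finite Y" using acc_lattice_finite_mem[OF L umatroid_finite[OF U] less.prems(2)] .
    then have smaller: "card (Y - {y}) < card Y" using y(1) by (rule card_Diff1_less)
    show ?thesis
    proof (cases "y \<in> X")
      case True
      have "X - {y} = X \<inter> (Y - {y})" using less.prems by blast
      then have Xy: "X - {y} \<in> D" using acc_lattice_Int[OF L less.prems(1) y(2)] by simp
      have "(Y - {y}) - (X - {y}) = Y - X" using True by blast
      moreover have "X - {y} \<subseteq> Y - {y}" using less.prems(3) by blast
      ultimately have "rho (Y - {y}) \<le> rho (X - {y}) + card (Y - X)"
        using less.hyps[OF smaller Xy y(2)] by simp
      moreover have "rho Y + rho (X - {y}) \<le> rho (Y - {y}) + rho X"
      proof -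
        have "(Y - {y}) \<union> X = Y" "(Y - {y}) \<inter> X = X - {y}" using True less.prems y by auto
        then show ?thesis using umatroid_submod[OF U y(2) less.prems(1)] by simp
      qed
      ultimately show ?thesis by linarith
    next
      case False
      have "rho (Y - {y}) \<le> rho X + card ((Y - {y}) - X)"
        using less.hyps[OF smaller less.prems(1) y(2)] less.prems False by blast
      moreover have "card (Y - X) = card ((Y - {y}) - X) + 1"
      proof -
        have "Y - X = insert y ((Y - {y}) - X)" using y False by blast
        then show ?thesis using \<open>finite Y\<close> by simp
      qed
      moreover have "rho Y \<le> rho (Y - {y}) + 1"
        using umatroid_unit[OF U y(2), of y] y(1) less.prems(2) by (simp add: insert_absorb)
      ultimately show ?thesis by linarith
    qed
  qed
qed

subsection \<open>The lattice D[a]\<close>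

lemma mem_lat_ext_iff: "X \<in> lat_ext D a \<longleftrightarrow> (\<exists>W\<in>D. W \<subseteq> X \<and> X \<subseteq> insert a W)"
proof
  assume "\<exists>W\<in>D. W \<subseteq> X \<and> X \<subseteq> insert a W"
  then obtain W where "W \<in> D" "W \<subseteq> X" "X \<subseteq> insert a W" by blast
  then have "X = W \<or> X = insert a W" by blast
  then show "X \<in> lat_ext D a" using \<open>W \<in> D\<close> unfolding lat_ext_def by blast
qed (auto simp: lat_ext_def)

lemma subset_lat_ext: "D \<subseteq> lat_ext D a"
  unfolding lat_ext_def by blast

lemma lat_ext_not_mem:
  assumes "X \<in> lat_ext D a" and "X \<notin> D"
  shows "a \<in> X" and "X - {a} \<in> D"
proof -
  obtain W where W: "W \<in> D" "W \<subseteq> X" "X \<subseteq> insert a W"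
    using assms(1) unfolding mem_lat_ext_iff by blast
  have "X \<noteq> W" using W(1) assms(2) by blast
  then have "a \<notin> W" using W(2,3) by (auto simp: insert_absorb)
  then have "X - {a} = W" using W(2,3) by blast
  then show "X - {a} \<in> D" using W(1) by simp
  show "a \<in> X" using W(2,3) \<open>X \<noteq> W\<close> by blast
qed

lemma acc_lattice_lat_ext:
  assumes L: "acc_lattice E D" and "a \<in> E"
  shows "acc_lattice E (lat_ext D a)"
proof -
  have "lat_ext D a \<subseteq> Pow E"
  proof
    fix X assume "X \<in> lat_ext D a"
    then obtain W where "W \<in> D" "X \<subseteq> insert a W" unfolding mem_lat_ext_iff by blast
    then show "X \<in> Pow E" using acc_lattice_subset_Pow[OF L] \<open>a \<in> E\<close> by blast
  qed
  moreover have "{} \<in> lat_ext D a" "E \<in> lat_ext D a"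
    using subset_lat_ext[of D a] acc_lattice_empty[OF L] acc_lattice_top[OF L] by blast+
  moreover have "A \<union> B \<in> lat_ext D a \<and> A \<inter> B \<in> lat_ext D a"
    if AB: "A \<in> lat_ext D a" "B \<in> lat_ext D a" for A B
  proof -
    obtain V W where V: "V \<in> D" "V \<subseteq> A" "A \<subseteq> insert a V"
      and W: "W \<in> D" "W \<subseteq> B" "B \<subseteq> insert a W"
      using AB unfolding mem_lat_ext_iff by blast
    have "V \<union> W \<subseteq> A \<union> B" "A \<union> B \<subseteq> insert a (V \<union> W)"
      "V \<inter> W \<subseteq> A \<inter> B" "A \<inter> B \<subseteq> insert a (V \<inter> W)"
      using V W by blast+
    then show ?thesis
      unfolding mem_lat_ext_iff using acc_lattice_Un[OF L V(1) W(1)] acc_lattice_Int[OF L V(1) W(1)]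
      by blast
  qed
  moreover have "\<exists>x\<in>A. A - {x} \<in> lat_ext D a" if A: "A \<in> lat_ext D a" "A \<noteq> {}" for A
  proof (cases "A \<in> D")
    case True
    then show ?thesis using acc_lattice_accessible[OF L True A(2)] subset_lat_ext[of D a] by blast
  next
    case False
    then show ?thesis using lat_ext_not_mem[OF A(1)] subset_lat_ext[of D a] by blast
  qed
  ultimately show ?thesis unfolding acc_lattice_def by blast
qed

subsection \<open>The generous extension\<close>

lemma card_subset_singleton: "S \<subseteq> {a} \<Longrightarrow> card S = (if a \<in> S then 1 else 0)"
  by (cases "a \<in> S") (auto simp: subset_singleton_iff)

lemma gen_ext_mem [simp]: "X \<in> D \<Longrightarrow> gen_ext D rho a X = rho X"
  by (simp add: gen_ext_def)

lemma min_le_gen_ext: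
  "X \<notin> D \<Longrightarrow> min (rho (X - {a}) + 1) (rho (sup_D D X)) \<le> gen_ext D rho a X"
  by (simp add: gen_ext_def)

context
  fixes E D rho a
  assumes U: "umatroid E D rho" and a: "a \<in> E"
begin

private lemma lattice_ext: "acc_lattice E (lat_ext D a)"
  using acc_lattice_lat_ext[OF umatroid_acc_lattice[OF U] a] .

private lemma sup_D_mem_lat_ext: "X \<in> lat_ext D a \<Longrightarrow> sup_D D X \<in> D"
  using sup_D_mem[OF umatroid_acc_lattice[OF U] umatroid_finite[OF U]]
    acc_lattice_subset_Pow[OF lattice_ext] by blast

lemma gen_ext_not_mem:
  assumes X: "X \<in> lat_ext D a" and "X \<notin> D"
  shows "gen_ext D rho a X = min (rho (X - {a}) + 1) (rho (sup_D D X))"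
proof -
  have "X - {a} \<subseteq> sup_D D X" using subset_sup_D[of X D] by blast
  then have "rho (X - {a}) \<le> rho (sup_D D X)"
    using umatroid_mono[OF U lat_ext_not_mem(2)[OF assms] sup_D_mem_lat_ext[OF X]] by blast
  then show ?thesis using \<open>X \<notin> D\<close> by (auto simp: gen_ext_def)
qed

lemma gen_ext_le:
  assumes X: "X \<in> lat_ext D a" and W: "W \<in> D" "X \<subseteq> insert a W"
  shows "gen_ext D rho a X \<le> rho W + card (X - W)"
proof (cases "X \<in> D")
  case True
  show ?thesis
  proof (cases "a \<in> X - W")
    case True
    then have "X \<union> W = insert a W" "X - W = {a}" using W(2) by blast+
    then have "insert a W \<in> D" using acc_lattice_Un[OF umatroid_acc_lattice[OF U] \<open>X \<in> D\<close> W(1)] by simp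
    then have "rho X \<le> rho W + 1"
      using umatroid_mono[OF U \<open>X \<in> D\<close> _ W(2)] umatroid_unit[OF U W(1)] by fastforce
    then show ?thesis using \<open>X \<in> D\<close> \<open>X - W = {a}\<close> by simp
  next
    case False
    then have "X \<subseteq> W" using W(2) by blast
    then show ?thesis using umatroid_mono[OF U \<open>X \<in> D\<close> W(1)] \<open>X \<in> D\<close> by simp
  qed
next
  case False
  note eq = gen_ext_not_mem[OF X False]
  show ?thesis
  proof (cases "a \<in> W")
    case True
    then have "X \<subseteq> W" using W(2) by blast
    then have "rho (sup_D D X) \<le> rho W"
      using umatroid_mono[OF U sup_D_mem_lat_ext[OF X] W(1)] sup_D_least[OF W(1)] by blast
    then show ?thesis using eq by simp
  next
    case False
    then have "X - {a} \<subseteq> W" "X - W = {a}" using W(2) lat_ext_not_mem(1)[OF X \<open>X \<notin> D\<close>] by blast+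
    then show ?thesis using eq umatroid_mono[OF U lat_ext_not_mem(2)[OF X \<open>X \<notin> D\<close>] W(1)] by simp
  qed
qed

lemma gen_ext_witness:
  assumes X: "X \<in> lat_ext D a"
  obtains W where "W \<in> D" "X \<subseteq> insert a W" "gen_ext D rho a X = rho W + card (X - W)"
proof (cases "X \<in> D")
  case True
  then show ?thesis by (intro that[of X]) auto
next
  case False
  have "gen_ext D rho a X = rho (X - {a}) + 1 \<or> gen_ext D rho a X = rho (sup_D D X)"
    using gen_ext_not_mem[OF X False] by linarith
  then show ?thesis
  proof
    assume "gen_ext D rho a X = rho (X - {a}) + 1"
    moreover have "X - (X - {a}) = {a}" using lat_ext_not_mem(1)[OF X False] by blast
    ultimately show ?thesis using lat_ext_not_mem(2)[OF X False] by (intro that[of "X - {a}"]) auto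
  next
    assume "gen_ext D rho a X = rho (sup_D D X)"
    moreover have "X - sup_D D X = {}" using subset_sup_D[of X D] by blast
    ultimately show ?thesis using sup_D_mem_lat_ext[OF X] subset_sup_D[of X D]
      by (intro that[of "sup_D D X"]) (auto simp only: card.empty add_0_right)
  qed
qed

lemma gen_ext_submod:
  assumes A: "A \<in> lat_ext D a" and B: "B \<in> lat_ext D a"
  shows "gen_ext D rho a (A \<union> B) + gen_ext D rho a (A \<inter> B) \<le> gen_ext D rho a A + gen_ext D rho a B"
proof -
  obtain V where V: "V \<in> D" "A \<subseteq> insert a V" "gen_ext D rho a A = rho V + card (A - V)"
    using gen_ext_witness[OF A] .
  obtain W where W: "W \<in> D" "B \<subseteq> insert a W" "gen_ext D rho a B = rho W + card (B - W)"
    using gen_ext_witness[OF B] .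
  have VW: "V \<union> W \<in> D" "V \<inter> W \<in> D"
    using acc_lattice_Un[OF _ V(1) W(1)] acc_lattice_Int[OF _ V(1) W(1)] umatroid_acc_lattice[OF U]
    by blast+
  have "gen_ext D rho a (A \<union> B) \<le> rho (V \<union> W) + card ((A \<union> B) - (V \<union> W))"
    using gen_ext_le[OF acc_lattice_Un[OF lattice_ext A B] VW(1)] V(2) W(2) by blast
  moreover have "gen_ext D rho a (A \<inter> B) \<le> rho (V \<inter> W) + card ((A \<inter> B) - (V \<inter> W))"
    using gen_ext_le[OF acc_lattice_Int[OF lattice_ext A B] VW(2)] V(2) W(2) by blast
  moreover have "rho (V \<union> W) + rho (V \<inter> W) \<le> rho V + rho W"
    using umatroid_submod[OF U V(1) W(1)] .
  moreover have "card ((A \<union> B) - (V \<union> W)) + card ((A \<inter> B) - (V \<inter> W)) \<le> card (A - V) + card (B - W)"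
  proof -
    have "(A \<union> B) - (V \<union> W) \<subseteq> {a}" "(A \<inter> B) - (V \<inter> W) \<subseteq> {a}" "A - V \<subseteq> {a}" "B - W \<subseteq> {a}"
      using V(2) W(2) by blast+
    then show ?thesis by (auto simp: card_subset_singleton)
  qed
  ultimately show ?thesis using V(3) W(3) by linarith
qed

lemma gen_ext_le_card_Diff:
  assumes A: "A \<in> lat_ext D a" and B: "B \<in> lat_ext D a" and "A \<subseteq> B"
  shows "gen_ext D rho a B \<le> gen_ext D rho a A + card (B - A)"
proof -
  obtain W where W: "W \<in> D" "A \<subseteq> insert a W" "gen_ext D rho a A = rho W + card (A - W)"
    using gen_ext_witness[OF A] .
  obtain C where C: "C \<in> D" "C \<subseteq> B" "B \<subseteq> insert a C"
    using B unfolding mem_lat_ext_iff by blast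
  have WC: "W \<union> C \<in> D" using acc_lattice_Un[OF umatroid_acc_lattice[OF U] W(1) C(1)] .
  have "finite B" using acc_lattice_finite_mem[OF lattice_ext umatroid_finite[OF U] B] .
  have "gen_ext D rho a B \<le> rho (W \<union> C) + card (B - (W \<union> C))"
    using gen_ext_le[OF B WC] C(3) by blast
  moreover have "rho (W \<union> C) \<le> rho W + card (C - W)"
    using umatroid_le_card_Diff[OF U W(1) WC] by (simp add: Un_Diff)
  moreover have "card (C - W) + card (B - (W \<union> C)) = card (B - W)"
  proof -
    have "B - W = (C - W) \<union> (B - (W \<union> C))" using C(2) by blast
    then have "card (B - W) = card ((C - W) \<union> (B - (W \<union> C)))" by (rule arg_cong)
    also have "\<dots> = card (C - W) + card (B - (W \<union> C))"
      using \<open>finite B\<close> C(2) by (intro card_Un_disjoint) (auto intro: finite_subset)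
    finally show ?thesis by simp
  qed
  moreover have "card (B - W) \<le> card (A - W) + card (B - A)"
  proof -
    have "card (B - W) \<le> card ((A - W) \<union> (B - A))"
      using \<open>finite B\<close> \<open>A \<subseteq> B\<close> by (intro card_mono) (auto intro: finite_subset)
    then show ?thesis using card_Un_le[of "A - W" "B - A"] by linarith
  qed
  ultimately show ?thesis using W(3) by linarith
qed

lemma gen_ext_mono:
  assumes A: "A \<in> lat_ext D a" and B: "B \<in> lat_ext D a" and "A \<subseteq> B"
  shows "gen_ext D rho a A \<le> gen_ext D rho a B"
proof -
  obtain W where W: "W \<in> D" "B \<subseteq> insert a W" "gen_ext D rho a B = rho W + card (B - W)"
    using gen_ext_witness[OF B] .
  have "finite B" using acc_lattice_finite_mem[OF lattice_ext umatroid_finite[OF U] B] .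
  then have "card (A - W) \<le> card (B - W)" using \<open>A \<subseteq> B\<close> by (intro card_mono) auto
  then show ?thesis using gen_ext_le[OF A W(1)] W(2,3) \<open>A \<subseteq> B\<close> by fastforce
qed

lemma umatroid_gen_ext: "umatroid E (lat_ext D a) (gen_ext D rho a)"
proof -
  have "gen_ext D rho a {} = 0"
    using umatroid_empty[OF U] acc_lattice_empty[OF umatroid_acc_lattice[OF U]] by simp
  moreover have "\<forall>A\<in>lat_ext D a. \<forall>B\<in>lat_ext D a. A \<subseteq> B \<longrightarrow> gen_ext D rho a A \<le> gen_ext D rho a B"
    using gen_ext_mono by blast
  moreover have "\<forall>A\<in>lat_ext D a. \<forall>B\<in>lat_ext D a.
      gen_ext D rho a (A \<union> B) + gen_ext D rho a (A \<inter> B) \<le> gen_ext D rho a A + gen_ext D rho a B"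
    using gen_ext_submod by blast
  moreover have "\<forall>A\<in>lat_ext D a. \<forall>x. insert x A \<in> lat_ext D a \<longrightarrow>
      gen_ext D rho a (insert x A) \<le> gen_ext D rho a A + 1"
  proof (intro ballI allI impI)
    fix A x assume "A \<in> lat_ext D a" "insert x A \<in> lat_ext D a"
    moreover have "card (insert x A - A) \<le> card {x}" by (rule card_mono) auto
    ultimately show "gen_ext D rho a (insert x A) \<le> gen_ext D rho a A + 1"
      using gen_ext_le_card_Diff[of A "insert x A"] by fastforce
  qed
  ultimately show ?thesis
    unfolding umatroid_def using umatroid_finite[OF U] lattice_ext by blast
qed

end

lemma gen_ext_dominates:
  assumes L: "acc_lattice E D" and "finite E" and "a \<in> E"
    and mono: "\<And>A B. A \<subseteq> B \<Longrightarrow> B \<subseteq> E \<Longrightarrow> rho' A \<le> rho' B"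
    and unit: "\<And>A x. insert x A \<subseteq> E \<Longrightarrow> rho' (insert x A) \<le> rho' A + 1"
    and le: "\<And>S. S \<in> D \<Longrightarrow> rho' S \<le> rho S"
    and S: "S \<in> lat_ext D a"
  shows "rho' S \<le> gen_ext D rho a S"
proof (cases "S \<in> D")
  case True
  then show ?thesis using le by simp
next
  case False
  have "S \<subseteq> E" using S acc_lattice_subset_Pow[OF acc_lattice_lat_ext[OF L \<open>a \<in> E\<close>]] by blast
  have "insert a (S - {a}) = S" using lat_ext_not_mem(1)[OF S False] by blast
  then have "rho' S \<le> rho (S - {a}) + 1"
    using unit[of a "S - {a}"] le[OF lat_ext_not_mem(2)[OF S False]] \<open>S \<subseteq> E\<close> by simp
  moreover have "rho' S \<le> rho (sup_D D S)"
  proof -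
    have "sup_D D S \<in> D" using sup_D_mem[OF L \<open>finite E\<close> \<open>S \<subseteq> E\<close>] .
    then show ?thesis
      using mono[OF subset_sup_D] le acc_lattice_subset_Pow[OF L] by (meson PowD order_trans subsetD)
  qed
  ultimately show ?thesis using min_le_gen_ext[OF False, of rho a] by linarith
qed

subsection \<open>Iterating the generous extension\<close>

lemma gen_iter_agrees: "S \<in> D \<Longrightarrow> snd (gen_iter D rho as) S = rho S"
  by (induction as arbitrary: D rho) (simp_all add: subsetD[OF subset_lat_ext])

lemma umatroid_gen_iter:
  "umatroid E D rho \<Longrightarrow> set as \<subseteq> E \<Longrightarrow> umatroid E (fst (gen_iter D rho as)) (snd (gen_iter D rho as))"
  by (induction as arbitrary: D rho) (simp_all add: umatroid_gen_ext)

lemma Un_mem_gen_iter: "S \<in> D \<Longrightarrow> Y \<subseteq> set as \<Longrightarrow> S \<union> Y \<in> fst (gen_iter D rho as)"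
proof (induction as arbitrary: D rho S Y)
  case Nil
  then show ?case by simp
next
  case (Cons a as)
  have "S \<union> (Y \<inter> {a}) \<in> lat_ext D a"
    unfolding mem_lat_ext_iff using Cons.prems(1) by blast
  moreover have "Y - {a} \<subseteq> set as" using Cons.prems(2) by auto
  ultimately have "(S \<union> (Y \<inter> {a})) \<union> (Y - {a}) \<in> fst (gen_iter (lat_ext D a) (gen_ext D rho a) as)"
    by (rule Cons.IH)
  moreover have "(S \<union> (Y \<inter> {a})) \<union> (Y - {a}) = S \<union> Y" by blast
  ultimately show ?case by simp
qed

lemma Pow_subset_gen_iter:
  assumes "acc_lattice E D" and "finite E" and "E - Atom D \<subseteq> set as"
  shows "Pow E \<subseteq> fst (gen_iter D rho as)"
proof
  fix X assume "X \<in> Pow E"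
  then have "X \<inter> Atom D \<in> D" using acc_lattice_Int_Atom assms(1,2) by blast
  moreover have "X - Atom D \<subseteq> set as" using \<open>X \<in> Pow E\<close> assms(3) by blast
  ultimately have "(X \<inter> Atom D) \<union> (X - Atom D) \<in> fst (gen_iter D rho as)"
    by (rule Un_mem_gen_iter)
  then show "X \<in> fst (gen_iter D rho as)" by (simp add: Int_Diff_Un)
qed

lemma fst_gen_iter_eq_Pow:
  assumes U: "umatroid E D rho" and as: "set as = E - Atom D"
  shows "fst (gen_iter D rho as) = Pow E"
proof
  show "fst (gen_iter D rho as) \<subseteq> Pow E"
    using umatroid_gen_iter[OF U] as acc_lattice_subset_Pow umatroid_acc_lattice by blast
  show "Pow E \<subseteq> fst (gen_iter D rho as)"
    using Pow_subset_gen_iter umatroid_acc_lattice[OF U] umatroid_finite[OF U] as by blast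
qed

lemma gen_iter_dominates:
  assumes mono: "\<And>A B. A \<subseteq> B \<Longrightarrow> B \<subseteq> E \<Longrightarrow> rho' A \<le> rho' B"
    and unit: "\<And>A x. insert x A \<subseteq> E \<Longrightarrow> rho' (insert x A) \<le> rho' A + 1"
    and "finite E"
  shows "acc_lattice E D \<Longrightarrow> set as \<subseteq> E \<Longrightarrow> (\<And>S. S \<in> D \<Longrightarrow> rho' S \<le> rho S) \<Longrightarrow>
    S \<in> fst (gen_iter D rho as) \<Longrightarrow> rho' S \<le> snd (gen_iter D rho as) S"
proof (induction as arbitrary: D rho)
  case Nil
  then show ?case by simp
next
  case (Cons a as)
  have "\<And>S. S \<in> lat_ext D a \<Longrightarrow> rho' S \<le> gen_ext D rho a S"
    using gen_ext_dominates[OF Cons.prems(1) \<open>finite E\<close> _ mono unit] Cons.prems(2,3) by simp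
  then show ?case
    using Cons.IH[OF acc_lattice_lat_ext[OF Cons.prems(1)]] Cons.prems(2,4) by simp
qed

lemma matroid_ext_le_gen_iter:
  assumes L: "acc_lattice E D" and as: "set as = E - Atom D"
    and U': "umatroid E (Pow E) rho'" and le: "\<forall>S\<in>D. rho' S \<le> rho S" and "S \<subseteq> E"
  shows "rho' S \<le> snd (gen_iter D rho as) S"
proof (rule gen_iter_dominates[OF _ _ umatroid_finite[OF U'] L])
  show "\<And>A B. A \<subseteq> B \<Longrightarrow> B \<subseteq> E \<Longrightarrow> rho' A \<le> rho' B"
    using umatroid_mono[OF U'] by blast
  show "\<And>A x. insert x A \<subseteq> E \<Longrightarrow> rho' (insert x A) \<le> rho' A + 1"
    using umatroid_unit[OF U'] by blast
  show "set as \<subseteq> E" using as by blast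
  show "\<And>S. S \<in> D \<Longrightarrow> rho' S \<le> rho S" using le by blast
  show "S \<in> fst (gen_iter D rho as)"
    using Pow_subset_gen_iter[OF L umatroid_finite[OF U']] as \<open>S \<subseteq> E\<close> by blast
qed

lemma umatroid_Pow_gen_iter:
  assumes U: "umatroid E D rho" and as: "set as = E - Atom D"
  shows "umatroid E (Pow E) (snd (gen_iter D rho as))"
proof -
  have "set as \<subseteq> E" using as by blast
  then show ?thesis using umatroid_gen_iter[OF U, of as] fst_gen_iter_eq_Pow[OF U as] by simp
qed

lemma gen_iter_order_independent:
  assumes U: "umatroid E D rho" and as: "set as = E - Atom D" and bs: "set bs = E - Atom D"
    and "S \<subseteq> E"
  shows "snd (gen_iter D rho bs) S = snd (gen_iter D rho as) S"
proof -
  note L = umatroid_acc_lattice[OF U]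
  have "\<forall>T\<in>D. snd (gen_iter D rho cs) T \<le> rho T" for cs
    using gen_iter_agrees[of _ D rho cs] by simp
  then have "snd (gen_iter D rho bs) S \<le> snd (gen_iter D rho as) S"
    and "snd (gen_iter D rho as) S \<le> snd (gen_iter D rho bs) S"
    using matroid_ext_le_gen_iter[OF L as umatroid_Pow_gen_iter[OF U bs] _ \<open>S \<subseteq> E\<close>]
      matroid_ext_le_gen_iter[OF L bs umatroid_Pow_gen_iter[OF U as] _ \<open>S \<subseteq> E\<close>]
    by blast+
  then show ?thesis by simp
qed

lemma lattice_ext_le_gen_iter:
  assumes U: "umatroid E D rho" and as: "set as = E - Atom D"
    and U': "umatroid E D' rho'" and "D \<subseteq> D'" and agree: "\<forall>S\<in>D. rho' S = rho S"
    and "S \<in> D'"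
  shows "rho' S \<le> snd (gen_iter D rho as) S"
proof -
  obtain cs where cs: "set cs = E - Atom D'"
    using finite_list[of "E - Atom D'"] umatroid_finite[OF U] by blast
  let ?rho'' = "snd (gen_iter D' rho' cs)"
  have "\<forall>T\<in>D. ?rho'' T \<le> rho T"
  proof
    fix T assume "T \<in> D"
    then show "?rho'' T \<le> rho T" using gen_iter_agrees[of T D'] agree \<open>D \<subseteq> D'\<close> by auto
  qed
  moreover have "S \<subseteq> E"
    using \<open>S \<in> D'\<close> acc_lattice_subset_Pow[OF umatroid_acc_lattice[OF U']] by blast
  ultimately have "?rho'' S \<le> snd (gen_iter D rho as) S"
    using matroid_ext_le_gen_iter[OF umatroid_acc_lattice[OF U] as umatroid_Pow_gen_iter[OF U' cs]]
    by blast
  then show ?thesis using gen_iter_agrees[OF \<open>S \<in> D'\<close>] by simp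
qed

theorem theorem4p12:
  fixes E :: "'a set" and D :: "'a set set" and rho :: "'a set \<Rightarrow> nat" and as :: "'a list"
  assumes U: "umatroid E D rho"
    and as: "distinct as" "set as = E - Atom D"
  shows
    \<comment> \<open>(1) the iterated generous extension is a matroid rank function on 2^E extending rho
         and dominating every matroid extension of rho\<close>
    "fst (gen_iter D rho as) = Pow E \<and>
     umatroid E (Pow E) (snd (gen_iter D rho as)) \<and>
     (\<forall>S\<in>D. snd (gen_iter D rho as) S = rho S) \<and>
     (\<forall>rho'. umatroid E (Pow E) rho' \<and> (\<forall>S\<in>D. rho' S = rho S) \<longrightarrow>
        (\<forall>S. S \<subseteq> E \<longrightarrow> rho' S \<le> snd (gen_iter D rho as) S)) \<and>
    \<comment> \<open>(2) independence of the order of the a_i\<close>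
    (\<forall>bs. distinct bs \<and> set bs = E - Atom D \<longrightarrow>
       (\<forall>S. S \<subseteq> E \<longrightarrow> snd (gen_iter D rho bs) S = snd (gen_iter D rho as) S)) \<and>
    \<comment> \<open>(3) restriction to any intermediate lattice D' is the dominant lattice extension\<close>
    (\<forall>D'. acc_lattice E D' \<and> D \<subseteq> D' \<longrightarrow>
       umatroid E D' (snd (gen_iter D rho as)) \<and>
       (\<forall>rho'. umatroid E D' rho' \<and> (\<forall>S\<in>D. rho' S = rho S) \<longrightarrow>
          (\<forall>S\<in>D'. rho' S \<le> snd (gen_iter D rho as) S)))"
proof (intro conjI allI impI ballI)
  note L = umatroid_acc_lattice[OF U]
  show "fst (gen_iter D rho as) = Pow E" using fst_gen_iter_eq_Pow[OF U as(2)] .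
  show matroid: "umatroid E (Pow E) (snd (gen_iter D rho as))" using umatroid_Pow_gen_iter[OF U as(2)] .
  show "snd (gen_iter D rho as) S = rho S" if "S \<in> D" for S using gen_iter_agrees[OF that] .
  show "rho' S \<le> snd (gen_iter D rho as) S"
    if "umatroid E (Pow E) rho' \<and> (\<forall>S\<in>D. rho' S = rho S)" and "S \<subseteq> E" for rho' S
    using matroid_ext_le_gen_iter[OF L as(2)] that by simp
  show "snd (gen_iter D rho bs) S = snd (gen_iter D rho as) S"
    if "distinct bs \<and> set bs = E - Atom D" and "S \<subseteq> E" for bs S
    using gen_iter_order_independent[OF U as(2)] that by blast
  show "umatroid E D' (snd (gen_iter D rho as))" if "acc_lattice E D' \<and> D \<subseteq> D'" for D'
    using umatroid_subset_lattice[OF matroid] acc_lattice_subset_Pow that by blast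
  show "rho' S \<le> snd (gen_iter D rho as) S"
    if "acc_lattice E D' \<and> D \<subseteq> D'" and "umatroid E D' rho' \<and> (\<forall>S\<in>D. rho' S = rho S)"
      and "S \<in> D'" for D' rho' S
    using lattice_ext_le_gen_iter[OF U as(2)] that by blast
qed

end
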